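(* Let $\Omega\subset\mathbb{S}^2$ be a domain and $H>0$. Let $$\mathfrak{C}_{\Omega}(H)=\{u\colon\overline{\Omega}\to [0,H] \;:\; u \text{ piecewise } C^1\}.$$ Then $\inf\{R_1[u]\colon u\in\mathfrak{C}_{\Omega}(H)\}=0$. Consequently, $R_1$ has no minimizer in $\mathfrak{C}_{\Omega}(H)$.
   Context: For a function $u$ on a domain $\Omega\subset\mathbb{S}^2$ (describing the radial graph $\{e^{u(\xi)}\xi:\xi\in\Omega\}$), with $\nabla_{\mathbb{S}^2}$ the gradient for the round metric and $d\Omega$ the round area element, the (scale-invariant free expansion) resistance functional is $$R_1[u]=\int_{\Omega}\frac{1}{1+|\nabla_{\mathbb{S}^2}u|^2}\,d\Omega.$$ *)

theory Defs
  imports "HOL-Analysis.Analysis"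
begin

definition S2 :: "(real^3) set" where
  "S2 = sphere 0 1"

text \<open>Cone over a subset A of S^2 inside the unit ball; the round area measure
  satisfies area(A) = 3 * Lebesgue volume of this cone, and more generally
  the integral over A of g w.r.t. the round area element equals
  3 * the Lebesgue integral over the cone of g(x/|x|).\<close>
definition sph_cone :: "(real^3) set \<Rightarrow> (real^3) set" where
  "sph_cone A = {x. x \<noteq> 0 \<and> norm x \<le> 1 \<and> x /\<^sub>R norm x \<in> A}"

definition sph_integral :: "(real^3) set \<Rightarrow> ((real^3) \<Rightarrow> real) \<Rightarrow> real" where
  "sph_integral A g =
     3 * (LINT x|lebesgue. indicator (sph_cone A) x * g (x /\<^sub>R norm x))"

definition sph_null :: "(real^3) set \<Rightarrow> bool" where
  "sph_null A \<longleftrightarrow> A \<subseteq> S2 \<and> sph_cone A \<in> null_sets lebesgue"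

definition sph_interior :: "(real^3) set \<Rightarrow> (real^3) set" where
  "sph_interior K = {x \<in> K. \<exists>e>0. S2 \<inter> ball x e \<subseteq> K}"

definition sph_grad :: "((real^3) \<Rightarrow> real) \<Rightarrow> real^3 \<Rightarrow> real^3" where
  "sph_grad u \<xi> = (THE g. g \<bullet> \<xi> = 0 \<and> (u has_derivative (\<lambda>v. g \<bullet> v)) (at \<xi> within S2))"

definition sph_domain :: "(real^3) set \<Rightarrow> bool" where
  "sph_domain \<Omega> \<longleftrightarrow> \<Omega> \<noteq> {} \<and> connected \<Omega> \<and> openin (top_of_set S2) \<Omega>"

definition piecewise_C1_on :: "(real^3) set \<Rightarrow> ((real^3) \<Rightarrow> real) \<Rightarrow> bool" where
  "piecewise_C1_on D u \<longleftrightarrow> continuous_on D u \<and>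
     (\<exists>\<K>. finite \<K> \<and> D \<subseteq> \<Union>\<K> \<and>
        (\<forall>K\<in>\<K>. closed K \<and> K \<subseteq> S2 \<and> sph_null (K - sph_interior K) \<and>
           (\<exists>U g g'. open U \<and> K \<subseteq> U \<and>
              (\<forall>x\<in>U. (g has_derivative (\<lambda>v. g' x \<bullet> v)) (at x)) \<and>
              continuous_on U g' \<and> (\<forall>x\<in>K \<inter> D. g x = u x))))"

definition frakC :: "(real^3) set \<Rightarrow> real \<Rightarrow> ((real^3) \<Rightarrow> real) set" where
  "frakC \<Omega> H = {u. u ` closure \<Omega> \<subseteq> {0..H} \<and> piecewise_C1_on (closure \<Omega>) u}"

definition R1 :: "(real^3) set \<Rightarrow> ((real^3) \<Rightarrow> real) \<Rightarrow> real" where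
  "R1 \<Omega> u = sph_integral \<Omega> (\<lambda>\<xi>. 1 / (1 + (norm (sph_grad u \<xi>))\<^sup>2))"

end

theory Submission
  imports Defs
begin

text \<open>Every admissible \<open>u\<close> has \<open>R1 \<Omega> u > 0\<close>, since the integrand is positive and the cone over the
  relatively open set \<open>\<Omega>\<close> has interior; so it suffices to make \<open>R1\<close> arbitrarily small. The zigzag
  \<open>u\<^sub>m(\<xi>) = H/\<pi> arccos (cos (\<pi> m \<xi>\<^sub>3))\<close> has \<open>m\<close> teeth of height \<open>H\<close> along the polar axis. Away from
  the finitely many circles of latitude where it bends, \<open>|\<nabla>u\<^sub>m|\<^sup>2 = (H m)\<^sup>2 (1 - \<xi>\<^sub>3\<^sup>2)\<close>, so the integrand
  \<open>1 / (1 + |\<nabla>u\<^sub>m|\<^sup>2)\<close> is uniformly small except near the poles, whose contribution is controlled by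
  a thin box of width \<open>s\<close> around the polar axis: \<open>R1 \<Omega> u\<^sub>m \<le> 24 (1 / (1 + (H m s)\<^sup>2) + s\<^sup>2)\<close>.\<close>

lemma closed_S2: "closed S2"
  by (simp add: S2_def)

lemma S2_component_bound: "x \<in> S2 \<Longrightarrow> \<bar>x $ i\<bar> \<le> 1"
  using component_le_norm_cart[of x i] by (simp add: S2_def)

lemma norm_sq_real3: "(norm (x::real^3))\<^sup>2 = (x$1)\<^sup>2 + (x$2)\<^sup>2 + (x$3)\<^sup>2"
  unfolding power2_norm_eq_inner by (simp add: inner_vec_def sum_3 power2_eq_square)

lemma sph_domain_subset_S2: "sph_domain \<Omega> \<Longrightarrow> \<Omega> \<subseteq> S2"
  unfolding sph_domain_def by (metis openin_subset topspace_euclidean_subtopology)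

lemma sph_domain_closure_subset_S2: "sph_domain \<Omega> \<Longrightarrow> closure \<Omega> \<subseteq> S2"
  using sph_domain_subset_S2 closed_S2 closure_minimal by blast

lemma inverse_one_plus_bounds:
  fixes t :: real
  assumes "0 \<le> t"
  shows "0 < 1 / (1 + t)" "1 / (1 + t) \<le> 1" "\<bar>1 / (1 + t)\<bar> \<le> 1"
  using assms by simp_all

section \<open>Spherical gradients\<close>

lemma inner_has_derivative_zero_within_sphere:
  fixes \<xi> :: "'a::real_inner"
  assumes "norm \<xi> = 1"
  shows "((\<lambda>y. \<xi> \<bullet> y) has_derivative (\<lambda>v. 0)) (at \<xi> within sphere 0 1)"
proof -
  have deriv: "((\<lambda>y. 1 - ((y - \<xi>) \<bullet> (y - \<xi>)) / 2) has_derivative (\<lambda>v. 0)) (at \<xi> within sphere 0 1)"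
    by (auto intro!: derivative_eq_intros)
  have eq: "\<xi> \<bullet> y = 1 - ((y - \<xi>) \<bullet> (y - \<xi>)) / 2" if "y \<in> sphere 0 1" for y
  proof -
    have "y \<bullet> y = 1" "\<xi> \<bullet> \<xi> = 1" using that assms norm_eq_1 by auto
    then show ?thesis by (simp add: inner_diff_left inner_diff_right inner_commute field_simps)
  qed
  show ?thesis
    by (rule has_derivative_transform[OF _ eq deriv]) (use assms in auto)
qed

lemma tangent_derivative_unique:
  fixes \<xi> p q :: "'a::real_inner"
  assumes "norm \<xi> = 1" and "p \<bullet> \<xi> = 0" "q \<bullet> \<xi> = 0"
    and p: "(f has_derivative (\<lambda>v. p \<bullet> v)) (at \<xi> within sphere 0 1)"
    and q: "(f has_derivative (\<lambda>v. q \<bullet> v)) (at \<xi> within sphere 0 1)"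
  shows "p = q"
proof (rule ccontr)
  assume "p \<noteq> q"
  define n where "n = (p - q) /\<^sub>R norm (p - q)"
  have "norm n = 1" using \<open>p \<noteq> q\<close> by (simp add: n_def)
  then have n: "n \<bullet> n = 1" using norm_eq_1 by blast
  have "n \<bullet> \<xi> = 0" using assms by (simp add: n_def inner_diff_left)
  have "\<xi> \<bullet> \<xi> = 1" using assms norm_eq_1 by blast
  \<comment> \<open>compare the two derivatives along the great circle through \<open>\<xi>\<close> in the direction of \<open>p - q\<close>\<close>
  define \<gamma> where "\<gamma> t = cos t *\<^sub>R \<xi> + sin t *\<^sub>R n" for t :: real
  have "\<gamma> t \<in> sphere 0 1" for t
  proof -
    have "\<gamma> t \<bullet> \<gamma> t = (cos t)\<^sup>2 + (sin t)\<^sup>2"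
      using \<open>\<xi> \<bullet> \<xi> = 1\<close> \<open>n \<bullet> \<xi> = 0\<close> n
      by (simp add: \<gamma>_def inner_add_left inner_add_right inner_commute power2_eq_square)
    then show ?thesis by (simp add: norm_eq_1)
  qed
  then have range: "\<gamma> ` UNIV \<subseteq> sphere 0 1" by blast
  have d\<gamma>: "(\<gamma> has_derivative (\<lambda>t. t *\<^sub>R n)) (at 0)"
    unfolding \<gamma>_def by (auto intro!: derivative_eq_intros)
  have "\<gamma> 0 = \<xi>" by (simp add: \<gamma>_def)
  have "((\<lambda>t. f (\<gamma> t)) has_derivative (\<lambda>t. r \<bullet> (t *\<^sub>R n))) (at 0)"
    if "(f has_derivative (\<lambda>v. r \<bullet> v)) (at \<xi> within sphere 0 1)" for r
    using has_derivative_in_compose[OF d\<gamma> has_derivative_subset[OF that[folded \<open>\<gamma> 0 = \<xi>\<close>] range]]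
    by simp
  from has_derivative_unique[OF this[OF p] this[OF q]]
  have "p \<bullet> n = q \<bullet> n" by (metis mult_1 inner_scaleR_right)
  moreover have "(p - q) \<bullet> n = norm (p - q)"
    using \<open>p \<noteq> q\<close> by (simp add: n_def dot_square_norm power2_eq_square)
  ultimately show False using \<open>p \<noteq> q\<close> by (simp add: inner_diff_left)
qed

lemma sph_grad_eqI:
  assumes "\<xi> \<in> S2" "p \<bullet> \<xi> = 0" "(u has_derivative (\<lambda>v. p \<bullet> v)) (at \<xi> within S2)"
  shows "sph_grad u \<xi> = p"
  unfolding sph_grad_def
proof (rule the_equality)
  fix q assume "q \<bullet> \<xi> = 0 \<and> (u has_derivative (\<lambda>v. q \<bullet> v)) (at \<xi> within S2)"
  then show "q = p"
    using tangent_derivative_unique[of \<xi> q p u] assms by (auto simp: S2_def)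
qed (use assms in auto)

lemma sph_grad_eq_on_openin:
  assumes P: "openin (top_of_set S2) P" "\<xi> \<in> P" and eq: "\<And>y. y \<in> P \<Longrightarrow> u y = g y"
    and g: "(g has_derivative (\<lambda>v. w \<bullet> v)) (at \<xi>)"
  shows "sph_grad u \<xi> = w - (w \<bullet> \<xi>) *\<^sub>R \<xi>"
proof (rule sph_grad_eqI)
  have "\<xi> \<in> S2" using P openin_subset by fastforce
  then show "\<xi> \<in> S2" "(w - (w \<bullet> \<xi>) *\<^sub>R \<xi>) \<bullet> \<xi> = 0"
    by (simp_all add: S2_def inner_diff_left dot_square_norm)
  define c where "c = w \<bullet> \<xi>"
  \<comment> \<open>\<open>\<xi> \<bullet> y\<close> is stationary along the sphere at \<open>\<xi>\<close>, so subtracting \<open>c (\<xi> \<bullet> y)\<close>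
    removes the normal part of \<open>w\<close>\<close>
  have "((\<lambda>y. (g y - c * (\<xi> \<bullet> y)) + c * (\<xi> \<bullet> y)) has_derivative
          (\<lambda>v. (w \<bullet> v - c * (\<xi> \<bullet> v)) + c * 0)) (at \<xi> within S2)"
    using inner_has_derivative_zero_within_sphere[of \<xi>] \<open>\<xi> \<in> S2\<close>
    by (intro has_derivative_add has_derivative_mult_right has_derivative_diff
        has_derivative_at_withinI[OF g]) (auto simp: S2_def intro!: derivative_eq_intros)
  then have "(g has_derivative (\<lambda>v. (w - c *\<^sub>R \<xi>) \<bullet> v)) (at \<xi> within S2)"
    by (simp add: inner_diff_right inner_commute)
  moreover obtain e where "e > 0" "ball \<xi> e \<inter> S2 \<subseteq> P"
    using P openin_contains_ball by metis
  ultimately show "(u has_derivative (\<lambda>v. (w - (w \<bullet> \<xi>) *\<^sub>R \<xi>) \<bullet> v)) (at \<xi> within S2)"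
    unfolding c_def using eq \<open>\<xi> \<in> S2\<close>
    by (elim has_derivative_transform_within) (force simp: dist_commute)+
qed

lemma continuous_at_within_openin:
  assumes "openin (top_of_set T) P" "x \<in> P" "continuous_on P f"
  shows "continuous (at x within T) f"
proof -
  obtain V where "open V" "P = T \<inter> V" using assms(1) by (auto simp: openin_open)
  then have "at x within T = at x within P"
    using assms(2) by (intro at_within_nhd[of x V]) auto
  then show ?thesis using assms(2,3) by (simp add: continuous_on_eq_continuous_within)
qed

lemma continuous_on_sph_grad_openin:
  assumes "openin (top_of_set S2) P" and eq: "\<And>y. y \<in> P \<Longrightarrow> u y = g y"
    and g: "\<And>y. y \<in> P \<Longrightarrow> (g has_derivative (\<lambda>v. g' y \<bullet> v)) (at y)"
    and "continuous_on P g'"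
  shows "continuous_on P (sph_grad u)"
proof (rule continuous_on_eq)
  show "continuous_on P (\<lambda>y. g' y - (g' y \<bullet> y) *\<^sub>R y)"
    using assms(4) by (intro continuous_intros)
  show "g' y - (g' y \<bullet> y) *\<^sub>R y = sph_grad u y" if "y \<in> P" for y
    using sph_grad_eq_on_openin[OF assms(1) that eq g[OF that]] by simp
qed

lemma sph_interior_subset: "sph_interior K \<subseteq> K"
  by (auto simp: sph_interior_def)

lemma openin_sph_interior:
  assumes "K \<subseteq> S2"
  shows "openin (top_of_set S2) (sph_interior K)"
  unfolding openin_contains_ball
proof (intro conjI ballI)
  show "sph_interior K \<subseteq> S2" using assms sph_interior_subset by blast
  fix x assume "x \<in> sph_interior K"
  then obtain e where e: "e > 0" "S2 \<inter> ball x e \<subseteq> K" by (auto simp: sph_interior_def)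
  have "y \<in> sph_interior K" if "y \<in> ball x e \<inter> S2" for y
  proof -
    have "S2 \<inter> ball y (e - dist x y) \<subseteq> K"
    proof
      fix z assume z: "z \<in> S2 \<inter> ball y (e - dist x y)"
      then have "dist x z < e" using dist_triangle[of x z y] by auto
      then show "z \<in> K" using z e(2) by auto
    qed
    then show ?thesis using that e(2) by (auto simp: sph_interior_def intro!: exI[of _ "e - dist x y"])
  qed
  then show "\<exists>e>0. ball x e \<inter> S2 \<subseteq> sph_interior K" using e(1) by blast
qed

section \<open>Cones and spherical integrals\<close>

lemma open_cone_openin_S2:
  assumes "openin (top_of_set S2) A"
  shows "open {x::real^3. x \<noteq> 0 \<and> x /\<^sub>R norm x \<in> A}"
proof -
  obtain V where "open V" "A = S2 \<inter> V" using assms by (auto simp: openin_open)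
  moreover have "continuous_on (- {0}) (\<lambda>x::real^3. x /\<^sub>R norm x)"
    by (intro continuous_intros) auto
  ultimately have "open (- {0} \<inter> (\<lambda>x::real^3. x /\<^sub>R norm x) -` V)"
    by (intro continuous_open_preimage) auto
  moreover have "{x::real^3. x \<noteq> 0 \<and> x /\<^sub>R norm x \<in> A} = - {0} \<inter> (\<lambda>x. x /\<^sub>R norm x) -` V"
    using \<open>A = S2 \<inter> V\<close> by (auto simp: S2_def)
  ultimately show ?thesis by simp
qed

lemma sph_cone_eq: "sph_cone A = cball 0 1 \<inter> {x. x \<noteq> 0 \<and> x /\<^sub>R norm x \<in> A}"
  by (auto simp: sph_cone_def)

lemma sph_cone_mono: "A \<subseteq> B \<Longrightarrow> sph_cone A \<subseteq> sph_cone B"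
  by (auto simp: sph_cone_def)

lemma sph_cone_UN: "sph_cone (\<Union>i\<in>I. A i) = (\<Union>i\<in>I. sph_cone (A i))"
  by (auto simp: sph_cone_def)

lemma sets_lebesgue_sph_cone:
  assumes "openin (top_of_set S2) A"
  shows "sph_cone A \<in> sets lebesgue"
  unfolding sph_cone_eq
  by (intro lebesgue_openin[OF openin_open_Int] open_cone_openin_S2 assms fmeasurableD lmeasurable_cball)

lemma not_negligible_sph_cone:
  assumes "openin (top_of_set S2) A" "A \<noteq> {}"
  shows "\<not> negligible (sph_cone A)"
proof -
  obtain \<xi> where "\<xi> \<in> A" using assms(2) by blast
  then have "\<xi> \<in> S2" using assms(1) openin_subset by fastforce
  then have "(1/2) *\<^sub>R \<xi> \<in> ball 0 1 \<inter> {x. x \<noteq> 0 \<and> x /\<^sub>R norm x \<in> A}"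
    using \<open>\<xi> \<in> A\<close> by (auto simp: S2_def)
  then have "\<not> negligible (ball 0 1 \<inter> {x::real^3. x \<noteq> 0 \<and> x /\<^sub>R norm x \<in> A})"
    by (intro open_not_negligible open_Int open_cone_openin_S2 assms(1) open_ball) blast
  moreover have "ball 0 1 \<inter> {x. x \<noteq> 0 \<and> x /\<^sub>R norm x \<in> A} \<subseteq> sph_cone A"
    by (auto simp: sph_cone_eq)
  ultimately show ?thesis using negligible_subset by blast
qed

lemma borel_measurable_sph_integrand:
  fixes f :: "real^3 \<Rightarrow> real"
  assumes A: "openin (top_of_set S2) A" "A \<subseteq> \<Omega>" and null: "negligible (sph_cone (\<Omega> - A))"
    and f: "continuous_on A f"
  shows "(\<lambda>x. indicator (sph_cone \<Omega>) x * f (x /\<^sub>R norm x)) \<in> borel_measurable lebesgue"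
proof (rule borel_measurable_AE)
  have "continuous_on (sph_cone A) (\<lambda>x. f (x /\<^sub>R norm x))"
    by (rule continuous_on_compose2[OF f]) (auto simp: sph_cone_def intro!: continuous_intros)
  then show "(\<lambda>x. if x \<in> sph_cone A then f (x /\<^sub>R norm x) else 0) \<in> borel_measurable lebesgue"
    using sets_lebesgue_sph_cone[OF A(1)]
    by (intro borel_measurable_if_I continuous_imp_measurable_on_sets_lebesgue)
  have "sph_cone \<Omega> - sph_cone A = sph_cone (\<Omega> - A)" using A(2) by (auto simp: sph_cone_def)
  then show "AE x in lebesgue. (if x \<in> sph_cone A then f (x /\<^sub>R norm x) else 0)
                               = indicator (sph_cone \<Omega>) x * f (x /\<^sub>R norm x)"
    using null A(2) unfolding eventually_ae_filter_negligible
    by (intro exI[of _ "sph_cone (\<Omega> - A)"]) (auto simp: indicator_def sph_cone_def)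
qed

lemma integrable_sph_integrand:
  fixes f :: "real^3 \<Rightarrow> real"
  assumes "(\<lambda>x. indicator (sph_cone \<Omega>) x * f (x /\<^sub>R norm x)) \<in> borel_measurable lebesgue"
    and bound: "\<And>\<xi>. \<xi> \<in> \<Omega> \<Longrightarrow> \<bar>f \<xi>\<bar> \<le> c"
  shows "integrable lebesgue (\<lambda>x. indicator (sph_cone \<Omega>) x * f (x /\<^sub>R norm x))"
proof (rule Bochner_Integration.integrable_bound[OF _ assms(1)])
  show "integrable lebesgue (\<lambda>x. c * indicator (cball (0::real^3) 1) x)"
    using lmeasurable_cball by (intro integrable_mult_right integrable_real_indicator) (auto simp: fmeasurable_def)
  show "AE x in lebesgue. norm (indicator (sph_cone \<Omega>) x * f (x /\<^sub>R norm x))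
                          \<le> norm (c * indicator (cball (0::real^3) 1) x)"
    using bound by (intro AE_I2) (fastforce simp: indicator_def sph_cone_def)
qed

lemma sph_integral_pos:
  assumes "openin (top_of_set S2) \<Omega>" "\<Omega> \<noteq> {}"
    and int: "integrable lebesgue (\<lambda>x. indicator (sph_cone \<Omega>) x * f (x /\<^sub>R norm x))"
    and pos: "\<And>\<xi>. \<xi> \<in> \<Omega> \<Longrightarrow> f \<xi> > 0"
  shows "sph_integral \<Omega> f > 0"
proof -
  define G where "G x = indicator (sph_cone \<Omega>) x * f (x /\<^sub>R norm x)" for x :: "real^3"
  have G: "G x \<ge> 0" "x \<in> sph_cone \<Omega> \<Longrightarrow> G x > 0" for x
    using pos by (auto simp: G_def indicator_def sph_cone_def less_imp_le)
  have intG: "integrable lebesgue G" unfolding G_def by (rule int)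
  have "integral\<^sup>L lebesgue G \<noteq> 0"
  proof
    assume "integral\<^sup>L lebesgue G = 0"
    then have "AE x in lebesgue. G x = 0"
      using integral_nonneg_eq_0_iff_AE[OF intG] G(1) by simp
    then obtain N where "negligible N" "{x. G x \<noteq> 0} \<subseteq> N"
      unfolding eventually_ae_filter_negligible by auto
    moreover have "sph_cone \<Omega> \<subseteq> {x. G x \<noteq> 0}" using G(2) by force
    ultimately show False
      using not_negligible_sph_cone[OF assms(1,2)] negligible_subset by blast
  qed
  moreover have "integral\<^sup>L lebesgue G \<ge> 0" using G(1) by simp
  ultimately show ?thesis by (simp add: sph_integral_def flip: G_def)
qed

section \<open>Positivity of the resistance\<close>

lemma continuous_on_UN_openin:
  fixes f :: "'a::t2_space \<Rightarrow> 'b::topological_space"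
  assumes "\<And>i. i \<in> I \<Longrightarrow> openin (top_of_set T) (S i)" "\<And>i. i \<in> I \<Longrightarrow> continuous_on (S i) f"
  shows "continuous_on (\<Union>i\<in>I. S i) f"
  unfolding continuous_on_eq_continuous_within
proof
  fix x assume "x \<in> (\<Union>i\<in>I. S i)"
  then obtain i where "i \<in> I" "x \<in> S i" by blast
  then have "continuous (at x within T) f" using assms continuous_at_within_openin by blast
  moreover have "(\<Union>i\<in>I. S i) \<subseteq> T" using assms(1) openin_subset by fastforce
  ultimately show "continuous (at x within (\<Union>i\<in>I. S i)) f" by (rule continuous_within_subset)
qed

lemma continuous_on_sph_grad_piece:
  assumes "K \<subseteq> U" and g: "\<forall>x\<in>U. (g has_derivative (\<lambda>v. g' x \<bullet> v)) (at x)"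
    and "continuous_on U g'" and agree: "\<forall>x\<in>K \<inter> closure \<Omega>. g x = u x"
    and "openin (top_of_set S2) (\<Omega> \<inter> sph_interior K)"
  shows "continuous_on (\<Omega> \<inter> sph_interior K) (sph_grad u)"
proof (rule continuous_on_sph_grad_openin[OF assms(5)])
  have sub: "\<Omega> \<inter> sph_interior K \<subseteq> K \<inter> closure \<Omega>"
    using sph_interior_subset[of K] closure_subset[of \<Omega>] by blast
  then show "u y = g y" if "y \<in> \<Omega> \<inter> sph_interior K" for y
    using agree that by (metis subsetD)
  show "(g has_derivative (\<lambda>v. g' y \<bullet> v)) (at y)" if "y \<in> \<Omega> \<inter> sph_interior K" for y
    using g sub that \<open>K \<subseteq> U\<close> by blast
  show "continuous_on (\<Omega> \<inter> sph_interior K) g'"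
    using sub \<open>K \<subseteq> U\<close> \<open>continuous_on U g'\<close> continuous_on_subset by blast
qed

lemma piecewise_C1_on_continuous_sph_grad:
  assumes \<Omega>: "sph_domain \<Omega>" and u: "piecewise_C1_on (closure \<Omega>) u"
  obtains A where "openin (top_of_set S2) A" "A \<subseteq> \<Omega>" "negligible (sph_cone (\<Omega> - A))"
    "continuous_on A (sph_grad u)"
proof -
  obtain \<K> where "finite \<K>" and cover: "closure \<Omega> \<subseteq> \<Union>\<K>"
    and \<K>: "\<forall>K\<in>\<K>. closed K \<and> K \<subseteq> S2 \<and> sph_null (K - sph_interior K) \<and>
          (\<exists>U g g'. open U \<and> K \<subseteq> U \<and> (\<forall>x\<in>U. (g has_derivative (\<lambda>v. g' x \<bullet> v)) (at x)) \<and>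
             continuous_on U g' \<and> (\<forall>x\<in>K \<inter> closure \<Omega>. g x = u x))"
    using u unfolding piecewise_C1_on_def by (elim conjE exE) (rule that)
  define A where "A = (\<Union>K\<in>\<K>. \<Omega> \<inter> sph_interior K)"
  have open_piece: "openin (top_of_set S2) (\<Omega> \<inter> sph_interior K)" if "K \<in> \<K>" for K
    using \<Omega> bspec[OF \<K> that] unfolding sph_domain_def
    by (intro openin_Int openin_sph_interior) simp_all
  then have "openin (top_of_set S2) A" unfolding A_def by (intro openin_Union) auto
  moreover have "A \<subseteq> \<Omega>" by (auto simp: A_def)
  moreover have "negligible (sph_cone (\<Omega> - A))"
  proof (rule negligible_subset)
    show "negligible (\<Union>K\<in>\<K>. sph_cone (K - sph_interior K))"
      using \<open>finite \<K>\<close> \<K> by (intro negligible_Union) (auto simp: sph_null_def negligible_iff_null_sets)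
    have "\<Omega> - A \<subseteq> (\<Union>K\<in>\<K>. K - sph_interior K)"
    proof
      fix x assume x: "x \<in> \<Omega> - A"
      then obtain K where "K \<in> \<K>" "x \<in> K" using cover closure_subset by blast
      moreover have "x \<notin> sph_interior K" using x \<open>K \<in> \<K>\<close> by (auto simp: A_def)
      ultimately show "x \<in> (\<Union>K\<in>\<K>. K - sph_interior K)" by blast
    qed
    then show "sph_cone (\<Omega> - A) \<subseteq> (\<Union>K\<in>\<K>. sph_cone (K - sph_interior K))"
      by (auto simp: sph_cone_def)
  qed
  moreover have "continuous_on A (sph_grad u)"
    unfolding A_def
  proof (rule continuous_on_UN_openin[OF open_piece])
    fix K assume "K \<in> \<K>"
    then obtain U g g' where "K \<subseteq> U" "\<forall>x\<in>U. (g has_derivative (\<lambda>v. g' x \<bullet> v)) (at x)"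
      "continuous_on U g'" "\<forall>x\<in>K \<inter> closure \<Omega>. g x = u x"
      using bspec[OF \<K> \<open>K \<in> \<K>\<close>] by (elim conjE exE) (rule that)
    then show "continuous_on (\<Omega> \<inter> sph_interior K) (sph_grad u)"
      by (rule continuous_on_sph_grad_piece[OF _ _ _ _ open_piece[OF \<open>K \<in> \<K>\<close>]])
  qed
  ultimately show thesis by (rule that)
qed

lemma R1_integrable:
  assumes "sph_domain \<Omega>" "piecewise_C1_on (closure \<Omega>) u"
  shows "integrable lebesgue
           (\<lambda>x. indicator (sph_cone \<Omega>) x * (1 / (1 + (norm (sph_grad u (x /\<^sub>R norm x)))\<^sup>2)))"
proof -
  obtain A where A: "openin (top_of_set S2) A" "A \<subseteq> \<Omega>" "negligible (sph_cone (\<Omega> - A))"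
    and "continuous_on A (sph_grad u)"
    using piecewise_C1_on_continuous_sph_grad[OF assms] .
  then have "continuous_on A (\<lambda>\<xi>. 1 / (1 + (norm (sph_grad u \<xi>))\<^sup>2))"
    by (intro continuous_intros) (auto simp: add_nonneg_eq_0_iff)
  then show ?thesis
    by (intro integrable_sph_integrand[where c=1] borel_measurable_sph_integrand[OF A])
      (use inverse_one_plus_bounds[OF zero_le_power2] in auto)
qed

lemma R1_pos:
  assumes "sph_domain \<Omega>" "piecewise_C1_on (closure \<Omega>) u"
  shows "R1 \<Omega> u > 0"
  unfolding R1_def
  using assms(1) unfolding sph_domain_def
  by (intro sph_integral_pos R1_integrable[OF assms] inverse_one_plus_bounds(1)[OF zero_le_power2]) auto

section \<open>The triangle wave\<close>

text \<open>The cone over a circle of latitude is the image of the plane under a smooth map.\<close>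
lemma negligible_sph_cone_latitude: "negligible (sph_cone {\<xi> \<in> S2. \<xi> $ 3 = c})"
proof (cases "\<bar>c\<bar> \<le> 1")
  case False
  then have "{\<xi> \<in> S2. \<xi> $ 3 = c} = {}" using S2_component_bound by fastforce
  then show ?thesis unfolding sph_cone_def by (simp only:) simp
next
  case True
  define a where "a = sqrt (1 - c\<^sup>2)"
  have "c\<^sup>2 \<le> 1" using True by (simp add: abs_square_le_1)
  then have a2: "a\<^sup>2 = 1 - c\<^sup>2" by (simp add: a_def)
  define f where "f p = (fst p * a * cos (snd p)) *\<^sub>R axis 1 1 + (fst p * a * sin (snd p)) *\<^sub>R axis 2 1
                      + (fst p * c) *\<^sub>R (axis 3 1 :: real^3)" for p :: "real \<times> real"
  have "f differentiable_on UNIV"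
    unfolding differentiable_on_def differentiable_def f_def
    by (auto intro!: derivative_eq_intros exI)
  then have "negligible (range f)" by (intro negligible_differentiable_image_lowdim) simp_all
  moreover have "sph_cone {\<xi> \<in> S2. \<xi> $ 3 = c} \<subseteq> range f"
  proof
    fix x assume "x \<in> sph_cone {\<xi> \<in> S2. \<xi> $ 3 = c}"
    then have x3: "x $ 3 = c * norm x" by (auto simp: sph_cone_def)
    define r where "r = norm x * a"
    have "(x$1)\<^sup>2 + (x$2)\<^sup>2 = (norm x)\<^sup>2 - (c * norm x)\<^sup>2"
      using norm_sq_real3[of x] x3 by simp
    also have "\<dots> = r\<^sup>2"
      by (simp add: r_def power_mult_distrib a2 algebra_simps)
    finally have "(x$1)\<^sup>2 + (x$2)\<^sup>2 = r\<^sup>2" .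
    then obtain t where t: "x$1 = r * cos t" "x$2 = r * sin t"
    proof (cases "r = 0")
      case True
      then show ?thesis using that[of 0] \<open>(x$1)\<^sup>2 + (x$2)\<^sup>2 = r\<^sup>2\<close>
        by (simp add: sum_power2_eq_zero_iff)
    next
      case False
      have "(x$1 / r)\<^sup>2 + (x$2 / r)\<^sup>2 = 1"
        using \<open>(x$1)\<^sup>2 + (x$2)\<^sup>2 = r\<^sup>2\<close> False by (simp add: power_divide add_divide_distrib[symmetric])
      then obtain t where "x$1 / r = cos t" "x$2 / r = sin t" by (rule sincos_total_2pi)
      then show ?thesis using that[of t] False by (simp add: field_simps)
    qed
    then have "x = f (norm x, t)"
      unfolding f_def vec_eq_iff forall_3 using t x3 by (simp add: r_def axis_def mult.commute mult.left_commute)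
    then show "x \<in> range f" by blast
  qed
  ultimately show ?thesis using negligible_subset by blast
qed

text \<open>Since \<open>arccos \<circ> cos\<close> is the \<open>2\<pi>\<close>-periodic triangle wave of amplitude \<open>\<pi>\<close>, this is a zigzag
  in the height \<open>x $ 3\<close> between the values \<open>0\<close> and \<open>H\<close>, affine of slope \<open>\<plusminus>H m\<close> on each band
  \<open>k \<le> m x $ 3 \<le> k + 1\<close>.\<close>
definition triangle_wave :: "real \<Rightarrow> nat \<Rightarrow> real^3 \<Rightarrow> real" where
  "triangle_wave H m x = H / pi * arccos (cos (pi * real m * x $ 3))"

definition wave_band :: "nat \<Rightarrow> int \<Rightarrow> (real^3) set" where
  "wave_band m k = {x \<in> S2. real_of_int k \<le> real m * x $ 3 \<and> real m * x $ 3 \<le> real_of_int k + 1}"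

definition wave_slope :: "real \<Rightarrow> nat \<Rightarrow> int \<Rightarrow> real^3" where
  "wave_slope H m k = (if even k then H * real m else - (H * real m)) *\<^sub>R axis 3 1"

definition wave_offset :: "real \<Rightarrow> int \<Rightarrow> real" where
  "wave_offset H k = (if even k then - H * real_of_int k else H * (real_of_int k + 1))"

definition wave_bends :: "nat \<Rightarrow> (real^3) set" where
  "wave_bends m = {\<xi> \<in> S2. \<exists>k::int. real m * \<xi> $ 3 = real_of_int k}"

lemma triangle_wave_eq_affine:
  assumes "real_of_int k \<le> real m * y $ 3" "real m * y $ 3 \<le> real_of_int k + 1"
  shows "triangle_wave H m y = wave_slope H m k \<bullet> y + wave_offset H k"
proof -
  define s where "s = pi * real m * y $ 3 - real_of_int k * pi"
  have "0 \<le> s" "s \<le> pi"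
    using mult_left_mono[OF assms(1), of pi] mult_left_mono[OF assms(2), of pi]
    by (simp_all add: s_def algebra_simps)
  show ?thesis
  proof (cases "even k")
    case True
    then obtain j where j: "k = 2 * j" by blast
    have "pi * real m * y $ 3 = s + of_int j * (2 * pi)" by (simp add: s_def j algebra_simps)
    then have "triangle_wave H m y = H / pi * s"
      using cos.plus_of_int[of s j] \<open>0 \<le> s\<close> \<open>s \<le> pi\<close> by (simp add: triangle_wave_def arccos_cos)
    also have "\<dots> = H * (real m * y $ 3 - real_of_int k)" by (simp add: s_def field_simps)
    finally show ?thesis
      using True by (simp add: wave_slope_def wave_offset_def inner_axis' algebra_simps)
  next
    case False
    then obtain j where j: "k = 2 * j + 1" by (metis oddE)
    have "pi * real m * y $ 3 = (s + pi) + of_int j * (2 * pi)" by (simp add: s_def j algebra_simps)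
    then have "cos (pi * real m * y $ 3) = cos (pi - s)"
      using cos.plus_of_int[of "s + pi" j] by (simp add: cos_periodic_pi)
    then have "arccos (cos (pi * real m * y $ 3)) = pi - s"
      using \<open>0 \<le> s\<close> \<open>s \<le> pi\<close> arccos_cos[of "pi - s"] by simp
    then have "triangle_wave H m y = H / pi * (pi - s)" by (simp add: triangle_wave_def)
    also have "\<dots> = H * (real_of_int k + 1 - real m * y $ 3)" by (simp add: s_def field_simps)
    finally show ?thesis
      using False by (simp add: wave_slope_def wave_offset_def inner_axis' algebra_simps)
  qed
qed

lemma triangle_wave_range:
  assumes "H \<ge> 0"
  shows "triangle_wave H m x \<in> {0..H}"
proof -
  have "0 \<le> arccos (cos (pi * real m * x $ 3))" "arccos (cos (pi * real m * x $ 3)) \<le> pi"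
    by (simp_all add: arccos_lbound arccos_ubound)
  then have "H / pi * arccos (cos (pi * real m * x $ 3)) \<le> H / pi * pi"
    using assms by (intro mult_left_mono) auto
  then show ?thesis
    using assms \<open>0 \<le> arccos _\<close> by (simp add: triangle_wave_def)
qed

lemma continuous_on_triangle_wave: "continuous_on A (triangle_wave H m)"
  unfolding triangle_wave_def by (intro continuous_intros) auto

lemma closed_wave_band: "closed (wave_band m k)"
proof -
  have "wave_band m k = S2 \<inter> {x. real_of_int k \<le> real m * x $ 3} \<inter> {x. real m * x $ 3 \<le> real_of_int k + 1}"
    by (auto simp: wave_band_def)
  then show ?thesis
    by (simp only:) (intro closed_Int closed_S2 closed_Collect_le continuous_intros continuous_on_component)
qed

lemma S2_subset_wave_bands:
  assumes "m > 0"
  shows "S2 \<subseteq> (\<Union>k\<in>{- int m..int m - 1}. wave_band m k)"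
proof
  fix x assume x: "x \<in> S2"
  define t where "t = real m * x $ 3"
  have "\<bar>t\<bar> \<le> real m"
    using S2_component_bound[OF x, of 3] by (simp add: t_def abs_mult mult_left_le)
  obtain k where "k \<in> {- int m..int m - 1}" "real_of_int k \<le> t" "t \<le> real_of_int k + 1"
  proof (cases "t < real m")
    case True
    then show ?thesis
      using \<open>\<bar>t\<bar> \<le> real m\<close> by (intro that[of "\<lfloor>t\<rfloor>"]) (auto simp: floor_less_iff le_floor_iff)
  next
    case False
    then show ?thesis using \<open>\<bar>t\<bar> \<le> real m\<close> assms by (intro that[of "int m - 1"]) auto
  qed
  then show "x \<in> (\<Union>k\<in>{- int m..int m - 1}. wave_band m k)"
    using x by (auto simp: wave_band_def t_def)
qed

lemma sph_interior_wave_band: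
  assumes "x \<in> S2" "real_of_int k < real m * x $ 3" "real m * x $ 3 < real_of_int k + 1"
  shows "x \<in> sph_interior (wave_band m k)"
proof -
  have "open {y::real^3. real_of_int k < real m * y $ 3 \<and> real m * y $ 3 < real_of_int k + 1}"
    by (intro open_Collect_conj open_Collect_less continuous_intros continuous_on_component)
  then obtain e where "e > 0"
    "ball x e \<subseteq> {y. real_of_int k < real m * y $ 3 \<and> real m * y $ 3 < real_of_int k + 1}"
    using assms by (force simp: open_contains_ball)
  then show ?thesis
    using assms by (fastforce simp: sph_interior_def wave_band_def)
qed

lemma wave_band_boundary: "wave_band m k - sph_interior (wave_band m k) \<subseteq> wave_bends m"
proof
  fix x assume x: "x \<in> wave_band m k - sph_interior (wave_band m k)"
  then have b: "x \<in> S2" "real_of_int k \<le> real m * x $ 3" "real m * x $ 3 \<le> real_of_int k + 1"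
    by (auto simp: wave_band_def)
  moreover have "\<not> (real_of_int k < real m * x $ 3 \<and> real m * x $ 3 < real_of_int k + 1)"
    using x b(1) sph_interior_wave_band[of x k m] by blast
  ultimately have "real m * x $ 3 = real_of_int k \<or> real m * x $ 3 = real_of_int (k + 1)"
    by linarith
  then show "x \<in> wave_bends m" using b(1) unfolding wave_bends_def by blast
qed

lemma negligible_sph_cone_wave_bends:
  assumes "m > 0"
  shows "negligible (sph_cone (wave_bends m))"
proof -
  have "wave_bends m \<subseteq> (\<Union>k\<in>{- int m..int m}. {\<xi> \<in> S2. \<xi> $ 3 = real_of_int k / real m})"
  proof
    fix \<xi> assume "\<xi> \<in> wave_bends m"
    then obtain k :: int where \<xi>: "\<xi> \<in> S2" "real m * \<xi> $ 3 = real_of_int k"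
      by (auto simp: wave_bends_def)
    have "\<bar>real m * \<xi> $ 3\<bar> \<le> real m"
      using S2_component_bound[OF \<xi>(1), of 3] by (simp add: abs_mult mult_left_le)
    then have "k \<in> {- int m..int m}" using \<xi>(2) by auto
    moreover have "\<xi> $ 3 = real_of_int k / real m" using \<xi>(2) assms by (simp add: field_simps)
    ultimately show "\<xi> \<in> (\<Union>k\<in>{- int m..int m}. {\<xi> \<in> S2. \<xi> $ 3 = real_of_int k / real m})"
      using \<xi>(1) by blast
  qed
  then have "sph_cone (wave_bends m)
               \<subseteq> (\<Union>k\<in>{- int m..int m}. sph_cone {\<xi> \<in> S2. \<xi> $ 3 = real_of_int k / real m})"
    unfolding sph_cone_UN[symmetric] by (rule sph_cone_mono)
  moreover have "negligible (\<Union>k\<in>{- int m..int m}. sph_cone {\<xi> \<in> S2. \<xi> $ 3 = real_of_int k / real m})"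
    by (intro negligible_Union) (auto intro: negligible_sph_cone_latitude)
  ultimately show ?thesis using negligible_subset by blast
qed

lemma piecewise_C1_on_triangle_wave:
  assumes "D \<subseteq> S2" "m > 0"
  shows "piecewise_C1_on D (triangle_wave H m)"
  unfolding piecewise_C1_on_def
proof (intro conjI continuous_on_triangle_wave exI[of _ "wave_band m ` {- int m..int m - 1}"] ballI)
  show "D \<subseteq> \<Union> (wave_band m ` {- int m..int m - 1})"
    using assms S2_subset_wave_bands by blast
  fix K assume "K \<in> wave_band m ` {- int m..int m - 1}"
  then obtain k where K: "K = wave_band m k" by blast
  show "closed K" by (simp add: K closed_wave_band)
  show "K \<subseteq> S2" by (auto simp: K wave_band_def)
  have "sph_cone (K - sph_interior K) \<subseteq> sph_cone (wave_bends m)"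
    using wave_band_boundary[of m k] by (auto simp: K sph_cone_def)
  then have "negligible (sph_cone (K - sph_interior K))"
    using negligible_sph_cone_wave_bends[OF assms(2)] negligible_subset by blast
  then show "sph_null (K - sph_interior K)"
    using \<open>K \<subseteq> S2\<close> by (auto simp: sph_null_def negligible_iff_null_sets)
  show "\<exists>U g g'. open U \<and> K \<subseteq> U \<and> (\<forall>x\<in>U. (g has_derivative (\<lambda>v. g' x \<bullet> v)) (at x)) \<and>
          continuous_on U g' \<and> (\<forall>x\<in>K \<inter> D. g x = triangle_wave H m x)"
    using triangle_wave_eq_affine[of k m _ H]
    by (intro exI[of _ UNIV] exI[of _ "\<lambda>y. wave_slope H m k \<bullet> y + wave_offset H k"]
        exI[of _ "\<lambda>_. wave_slope H m k"]) (auto simp: K wave_band_def intro!: derivative_eq_intros)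
qed auto

lemma triangle_wave_in_frakC:
  assumes "sph_domain \<Omega>" "H > 0" "m > 0"
  shows "triangle_wave H m \<in> frakC \<Omega> H"
  using assms triangle_wave_range[of H m] sph_domain_closure_subset_S2
  by (auto simp: frakC_def intro: piecewise_C1_on_triangle_wave)

lemma sph_grad_triangle_wave:
  assumes "\<xi> \<in> S2 - wave_bends m"
  shows "(norm (sph_grad (triangle_wave H m) \<xi>))\<^sup>2 = (H * real m)\<^sup>2 * ((\<xi>$1)\<^sup>2 + (\<xi>$2)\<^sup>2)"
proof -
  define k where "k = \<lfloor>real m * \<xi> $ 3\<rfloor>"
  have "real_of_int k < real m * \<xi> $ 3"
    using assms of_int_floor_le[of "real m * \<xi> $ 3"] by (auto simp: k_def less_le wave_bends_def)
  moreover have "real m * \<xi> $ 3 < real_of_int k + 1" unfolding k_def by linarith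
  ultimately have \<xi>: "\<xi> \<in> sph_interior (wave_band m k)" using sph_interior_wave_band assms by blast
  define w where "w = wave_slope H m k"
  have grad: "sph_grad (triangle_wave H m) \<xi> = w - (w \<bullet> \<xi>) *\<^sub>R \<xi>"
    using triangle_wave_eq_affine[of k m _ H] sph_interior_subset
    by (intro sph_grad_eq_on_openin[OF openin_sph_interior \<xi>, where g="\<lambda>y. w \<bullet> y + wave_offset H k"])
      (force simp: wave_band_def w_def intro!: derivative_eq_intros)+
  have "\<xi> \<bullet> \<xi> = 1" using assms by (simp add: S2_def dot_square_norm)
  have "(norm (sph_grad (triangle_wave H m) \<xi>))\<^sup>2 = (w - (w \<bullet> \<xi>) *\<^sub>R \<xi>) \<bullet> (w - (w \<bullet> \<xi>) *\<^sub>R \<xi>)"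
    by (simp add: grad power2_norm_eq_inner)
  also have "\<dots> = w \<bullet> w - (w \<bullet> \<xi>)\<^sup>2"
    using \<open>\<xi> \<bullet> \<xi> = 1\<close>
    by (simp add: inner_diff_left inner_diff_right inner_commute power2_eq_square algebra_simps)
  also have "\<dots> = (H * real m)\<^sup>2 * (1 - (\<xi>$3)\<^sup>2)"
    by (simp add: w_def wave_slope_def inner_axis' power2_eq_square algebra_simps)
  also have "1 - (\<xi>$3)\<^sup>2 = (\<xi>$1)\<^sup>2 + (\<xi>$2)\<^sup>2"
    using norm_sq_real3[of \<xi>] assms by (simp add: S2_def)
  finally show ?thesis .
qed

section \<open>The resistance of the triangle wave\<close>

lemma measure_lborel_cbox_real3:
  assumes "\<And>i. a $ i \<le> b $ i"
  shows "measure lborel (cbox (a::real^3) b) = (b$1 - a$1) * (b$2 - a$2) * (b$3 - a$3)"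
proof -
  have "cbox a b \<noteq> {}" using assms by (simp add: interval_ne_empty_cart less_eq_vec_def)
  then have "measure lborel (cbox a b) = (\<Prod>i\<in>UNIV. b$i - a$i)" by (rule content_cbox_cart)
  moreover have "(\<Prod>i\<in>UNIV. b$i - a$i) = (b$1 - a$1) * (b$2 - a$2) * (b$3 - a$3)"
    unfolding UNIV_3 by simp
  ultimately show ?thesis by simp
qed

lemma integrable_indicator_cbox: "integrable lebesgue (indicator (cbox (a::'a::euclidean_space) b) :: 'a \<Rightarrow> real)"
  using lmeasurable_cbox[of a b] by (intro integrable_real_indicator) (auto simp: fmeasurable_def)

definition centered_cube :: "(real^3) set" where
  "centered_cube = cbox (\<chi> i. -1) (\<chi> i. 1)"

definition polar_box :: "real \<Rightarrow> (real^3) set" where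
  "polar_box s = cbox (\<chi> i. if i = 3 then -1 else -s) (\<chi> i. if i = 3 then 1 else s)"

lemma integral_cube_polar_box:
  assumes "s > 0"
  shows "integrable lebesgue (\<lambda>x. \<eta> * indicator centered_cube x + indicator (polar_box s) x)"
    and "integral\<^sup>L lebesgue (\<lambda>x. \<eta> * indicator centered_cube x + indicator (polar_box s) x)
           = 8 * \<eta> + 8 * s\<^sup>2"
proof -
  show "integrable lebesgue (\<lambda>x. \<eta> * indicator centered_cube x + indicator (polar_box s) x)"
    unfolding centered_cube_def polar_box_def
    by (intro Bochner_Integration.integrable_add Bochner_Integration.integrable_mult_right
        integrable_indicator_cbox)
  have "integral\<^sup>L lebesgue (\<lambda>x. \<eta> * indicator centered_cube x + indicator (polar_box s) x)
          = \<eta> * measure lebesgue centered_cube + measure lebesgue (polar_box s)"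
    unfolding centered_cube_def polar_box_def by (simp add: integrable_indicator_cbox)
  also have "\<dots> = 8 * \<eta> + 8 * s\<^sup>2"
    using assms by (simp add: centered_cube_def polar_box_def measure_lborel_cbox_real3 power2_eq_square)
  finally show "integral\<^sup>L lebesgue (\<lambda>x. \<eta> * indicator centered_cube x + indicator (polar_box s) x)
                  = 8 * \<eta> + 8 * s\<^sup>2" .
qed

lemma inverse_one_plus_le_box_indicators:
  fixes x :: "real^3" and a s :: real
  assumes "a \<ge> 0" "s > 0" "norm x \<le> 1"
  shows "1 / (1 + a * ((x$1)\<^sup>2 + (x$2)\<^sup>2))
           \<le> 1 / (1 + a * s\<^sup>2) * indicator centered_cube x + indicator (polar_box s) x"
proof -
  have x: "\<bar>x $ i\<bar> \<le> 1" for i using component_le_norm_cart[of x i] assms(3) by linarith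
  show ?thesis
  proof (cases "s\<^sup>2 \<le> (x$1)\<^sup>2 + (x$2)\<^sup>2")
    case True
    have "x \<in> centered_cube" using x by (auto simp: centered_cube_def mem_box_cart abs_le_iff)
    moreover have "1 / (1 + a * ((x$1)\<^sup>2 + (x$2)\<^sup>2)) \<le> 1 / (1 + a * s\<^sup>2)"
      using True assms(1) by (intro divide_left_mono mult_left_mono add_left_mono) (auto intro!: mult_pos_pos add_pos_nonneg)
    ultimately show ?thesis by (simp add: indicator_def)
  next
    case False
    then have "(x$1)\<^sup>2 < s\<^sup>2" "(x$2)\<^sup>2 < s\<^sup>2"
      using zero_le_power2[of "x$1"] zero_le_power2[of "x$2"] by linarith+
    then have "\<bar>x$1\<bar> < s" "\<bar>x$2\<bar> < s"
      using power2_less_imp_less[of "\<bar>x$1\<bar>" s] power2_less_imp_less[of "\<bar>x$2\<bar>" s] assms(2)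
      by simp_all
    then have "x \<in> polar_box s"
      using x[of 3] by (auto simp: polar_box_def mem_box_cart forall_3 abs_le_iff abs_less_iff)
    moreover have "1 / (1 + a * ((x$1)\<^sup>2 + (x$2)\<^sup>2)) \<le> 1"
      using assms(1) by (simp add: inverse_one_plus_bounds)
    moreover have "0 \<le> 1 / (1 + a * s\<^sup>2) * indicator centered_cube x"
      using assms(1) by (simp add: add_pos_nonneg)
    ultimately show ?thesis by simp
  qed
qed

lemma triangle_wave_integrand_le:
  assumes "x \<in> sph_cone (S2 - wave_bends m)"
  shows "1 / (1 + (norm (sph_grad (triangle_wave H m) (x /\<^sub>R norm x)))\<^sup>2)
           \<le> 1 / (1 + (H * real m)\<^sup>2 * ((x$1)\<^sup>2 + (x$2)\<^sup>2))"
proof -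
  define \<xi> where "\<xi> = x /\<^sub>R norm x"
  have x: "x \<noteq> 0" "norm x \<le> 1" "\<xi> \<in> S2 - wave_bends m" using assms by (auto simp: sph_cone_def \<xi>_def)
  have "(x$1)\<^sup>2 + (x$2)\<^sup>2 = (norm x)\<^sup>2 * ((\<xi>$1)\<^sup>2 + (\<xi>$2)\<^sup>2)"
    using x(1) by (simp add: \<xi>_def power_divide field_simps)
  also have "\<dots> \<le> (\<xi>$1)\<^sup>2 + (\<xi>$2)\<^sup>2"
    using x(2) by (intro mult_left_le_one_le) (auto simp: abs_square_le_1)
  finally have "(H * real m)\<^sup>2 * ((x$1)\<^sup>2 + (x$2)\<^sup>2) \<le> (norm (sph_grad (triangle_wave H m) \<xi>))\<^sup>2"
    using sph_grad_triangle_wave[OF x(3), of H] by (simp add: mult_left_mono)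
  then show ?thesis
    unfolding \<xi>_def[symmetric] by (intro divide_left_mono mult_pos_pos add_pos_nonneg) auto
qed

lemma R1_triangle_wave_le:
  assumes \<Omega>: "sph_domain \<Omega>" and "m > 0" "s > 0"
  shows "R1 \<Omega> (triangle_wave H m) \<le> 24 * (1 / (1 + (H * real m * s)\<^sup>2) + s\<^sup>2)"
proof -
  define G where "G x = indicator (sph_cone \<Omega>) x *
                          (1 / (1 + (norm (sph_grad (triangle_wave H m) (x /\<^sub>R norm x)))\<^sup>2))" for x
  define \<eta> where "\<eta> = 1 / (1 + (H * real m * s)\<^sup>2)"
  define b where "b x = \<eta> * indicator centered_cube x + indicator (polar_box s) x" for x :: "real^3"
  have intG: "integrable lebesgue G"
    unfolding G_def using \<Omega> sph_domain_closure_subset_S2 piecewise_C1_on_triangle_wave \<open>m > 0\<close>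
    by (blast intro: R1_integrable)
  have intb: "integrable lebesgue b" and int_b: "integral\<^sup>L lebesgue b = 8 * \<eta> + 8 * s\<^sup>2"
    unfolding b_def using integral_cube_polar_box[OF \<open>s > 0\<close>] by simp_all
  have "G x \<le> b x" if "x \<notin> sph_cone (wave_bends m)" for x
  proof (cases "x \<in> sph_cone \<Omega>")
    case False
    then show ?thesis using \<open>s > 0\<close> by (simp add: G_def b_def \<eta>_def add_pos_nonneg)
  next
    case True
    then have x: "x \<in> sph_cone (S2 - wave_bends m)"
      using that sph_domain_subset_S2[OF \<Omega>] by (auto simp: sph_cone_def)
    then have "G x \<le> 1 / (1 + (H * real m)\<^sup>2 * ((x$1)\<^sup>2 + (x$2)\<^sup>2))"
      using True triangle_wave_integrand_le by (simp add: G_def)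
    also have "\<dots> \<le> b x"
      using inverse_one_plus_le_box_indicators[of "(H * real m)\<^sup>2" s x] \<open>s > 0\<close> x
      by (simp add: b_def \<eta>_def power_mult_distrib sph_cone_def)
    finally show ?thesis .
  qed
  then have "AE x in lebesgue. G x \<le> b x"
    using negligible_sph_cone_wave_bends[OF \<open>m > 0\<close>]
    unfolding eventually_ae_filter_negligible by blast
  then have "integral\<^sup>L lebesgue G \<le> 8 * \<eta> + 8 * s\<^sup>2"
    using integral_mono_AE[OF intG intb] int_b by simp
  moreover have "R1 \<Omega> (triangle_wave H m) = 3 * integral\<^sup>L lebesgue G"
    by (simp add: R1_def sph_integral_def G_def[abs_def])
  ultimately show ?thesis by (simp add: \<eta>_def)
qed

lemma R1_triangle_wave_less:
  assumes "sph_domain \<Omega>" "H > 0" "\<epsilon> > 0"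
  obtains m where "m > 0" "R1 \<Omega> (triangle_wave H m) < \<epsilon>"
proof -
  define s where "s = sqrt (\<epsilon> / 100)"
  have "s > 0" "s\<^sup>2 = \<epsilon> / 100" using assms(3) by (simp_all add: s_def)
  define m where "m = Suc (nat \<lceil>1 / (H * s\<^sup>2)\<rceil>)"
  have "m > 0" by (simp add: m_def)
  have "1 / (H * s\<^sup>2) \<le> real m" using real_nat_ceiling_ge[of "1 / (H * s\<^sup>2)"] by (simp add: m_def)
  \<comment> \<open>with \<open>H m s\<^sup>2 \<ge> 1\<close> both terms of the bound are at most \<open>s\<^sup>2\<close>\<close>
  then have "1 \<le> H * real m * s\<^sup>2" using \<open>s > 0\<close> assms(2) by (simp add: divide_le_eq mult_ac)
  then have "1 \<le> (H * real m * s\<^sup>2)\<^sup>2" by (simp add: one_le_power)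
  also have "\<dots> = s\<^sup>2 * (H * real m * s)\<^sup>2" by (simp add: power2_eq_square)
  finally have "1 \<le> s\<^sup>2 * (1 + (H * real m * s)\<^sup>2)"
    by (simp add: algebra_simps add_increasing)
  then have "1 / (1 + (H * real m * s)\<^sup>2) \<le> s\<^sup>2"
    by (simp add: divide_le_eq add_pos_nonneg)
  then have "R1 \<Omega> (triangle_wave H m) \<le> 48 * s\<^sup>2"
    using R1_triangle_wave_le[OF assms(1) \<open>m > 0\<close> \<open>s > 0\<close>, of H] by simp
  also have "\<dots> < \<epsilon>" using \<open>s\<^sup>2 = \<epsilon> / 100\<close> assms(3) by simp
  finally show ?thesis using that \<open>m > 0\<close> by blast
qed

lemma Inf_image_eq_0_no_minimum:
  fixes f :: "'a \<Rightarrow> real"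
  assumes "X \<noteq> {}" and pos: "\<And>x. x \<in> X \<Longrightarrow> f x > 0"
    and small: "\<And>\<epsilon>. \<epsilon> > 0 \<Longrightarrow> \<exists>x\<in>X. f x < \<epsilon>"
  shows "Inf (f ` X) = 0 \<and> \<not> (\<exists>x\<in>X. \<forall>y\<in>X. f x \<le> f y)"
proof
  have "bdd_below (f ` X)" using pos by (meson bdd_belowI2 less_imp_le)
  have "0 \<le> Inf (f ` X)" using assms(1) pos by (intro cInf_greatest) (auto intro: less_imp_le)
  moreover have "\<not> Inf (f ` X) > 0"
  proof
    assume "Inf (f ` X) > 0"
    then obtain x where "x \<in> X" "f x < Inf (f ` X)" using small by blast
    then show False using cInf_lower[OF _ \<open>bdd_below (f ` X)\<close>, of "f x"] by simp
  qed
  ultimately show "Inf (f ` X) = 0" by simp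
  show "\<not> (\<exists>x\<in>X. \<forall>y\<in>X. f x \<le> f y)"
  proof
    assume "\<exists>x\<in>X. \<forall>y\<in>X. f x \<le> f y"
    then obtain x where "x \<in> X" "\<And>y. y \<in> X \<Longrightarrow> f x \<le> f y" by blast
    moreover obtain y where "y \<in> X" "f y < f x" using small pos[OF \<open>x \<in> X\<close>] by blast
    ultimately show False by fastforce
  qed
qed

theorem proposition2p6:
  fixes \<Omega> :: "(real^3) set" and H :: real
  assumes "sph_domain \<Omega>" and "H > 0"
  shows "Inf (R1 \<Omega> ` frakC \<Omega> H) = 0 \<and>
         \<not> (\<exists>u\<in>frakC \<Omega> H. \<forall>v\<in>frakC \<Omega> H. R1 \<Omega> u \<le> R1 \<Omega> v)"
proof (rule Inf_image_eq_0_no_minimum)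
  show "frakC \<Omega> H \<noteq> {}" using triangle_wave_in_frakC[OF assms zero_less_one] by auto
  show "R1 \<Omega> u > 0" if "u \<in> frakC \<Omega> H" for u
    using R1_pos[OF assms(1)] that by (simp add: frakC_def)
  show "\<exists>u\<in>frakC \<Omega> H. R1 \<Omega> u < \<epsilon>" if \<epsilon>: "\<epsilon> > 0" for \<epsilon>
  proof -
    obtain m where m: "m > 0" "R1 \<Omega> (triangle_wave H m) < \<epsilon>"
      using R1_triangle_wave_less[OF assms \<epsilon>] .
    show ?thesis using triangle_wave_in_frakC[OF assms m(1)] m(2) by blast
  qed
qed

end
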